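(* Let $(N,m)$ be a marked P/T net, let $\mathcal U[N,m]=(O,m_0)$ be its unfolding with folding morphism $(f_S,f_T)$, and let $\overleftarrow{(N,m)}=(\overleftarrow O,m_0)$ be its reversible version. Then for every marking $m'$ of $N$: $(N,m)\to^*(N,m')$ if and only if there exists a marking $m''$ of $O$ with $(\overleftarrow O,m_0)\to^*(\overleftarrow O,m'')$ (any finite sequence of forward and backward firings) and $m'=f_S(m'')$.
   Context: A P/T net $N=(S_N,T_N,{}^\bullet\_,\_^\bullet)$ has disjoint sets of places and transitions and functions assigning to each transition a nonempty preset ${}^\bullet\mathsf t$ and nonempty postset $\mathsf t^\bullet$, both multisets over $S_N$. Markings are multisets over $S_N$; firing rule: if ${}^\bullet\mathsf t=m_1$, $\mathsf t^\bullet=m_2$ then $(N,m_1\oplus m_3)\xrightarrow{\mathsf t}(N,m_2\oplus m_3)$; $\to^*$ is a finite sequence of firings. Causality $\preceq$, conflict $\#$ and concurrency $co$ on places and transitions of a net: $\prec=\{(a,\mathsf t)\mid a\in{}^\bullet\mathsf t\}\cup\{(\mathsf t,a)\mid a\in\mathsf t^\bullet\}$, $\preceq$ its reflexive-transitive closure; $x\#y$ iff there are transitions $\mathsf t_1\preceq x$, $\mathsf t_2\preceq y$, $\mathsf t_1\ne\mathsf t_2$, with ${}^\bullet\mathsf t_1\cap{}^\bullet\mathsf t_2\ne\emptyset$; $x\ co\ y$ iff $x\ne y$, $x\not\preceq y$, $y\not\preceq x$, not $x\#y$; a set $X$ satisfies $CO(X)$ iff its elements are pairwise $co$ and only finitely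 many transitions $\mathsf t$ satisfy $\mathsf t\preceq x$ for some $x\in X$. The unfolding $\mathcal U[N,m]=(S,T,{}^\bullet\_,\_^\bullet)$ is the least net such that: (i) if $m(a)=n$ then the places $a(\emptyset,i)$, $1\le i\le n$, are in $S$; (ii) if $H=\{a_j(h_j,i_j)\mid j\in J\}\subseteq S$ with $CO(H)$, $\mathsf t\in T_N$ and ${}^\bullet\mathsf t=\bigoplus_{j\in J}a_j$, then $\mathsf t(H)\in T$ with preset $H$; (iii) if $x=\mathsf t(H)\in T$ then the places $a(\{x\},i)$ for $1\le i\le\mathsf t^\bullet(a)$ are in $S$ and form the postset of $x$. Its initial marking $m_0$ is the set of places $a(\emptyset,i)$; it is an occurrence net. The folding morphism is $f_S(a(h,i))=a$, $f_T(\mathsf t(H))=\mathsf t$, extended to multisets. The reversible version $\overleftarrow O$ of $O$ has the same places, transitions $T_O\cup\{\underline{\mathsf t}\mid\mathsf t\in T_O\}$, forward transitions keep pre/postsets and ${}^\bullet\underline{\mathsf t}=\mathsf t^\bullet$, $\underline{\mathsf t}^\bullet={}^\bullet\mathsf t$; firings of transitions of $T_O$ are forward, of reverse transitions backward. The reversible version of $(N,m)$ is $\overleftarrow{\mathcal U[N,m]}$. *)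

theory Defs
  imports Main "HOL-Library.Multiset" "HOL-Library.FSet"
begin

record ('s, 't) net =
  places :: "'s set"
  trans  :: "'t set"
  pre    :: "'t \<Rightarrow> 's multiset"
  post   :: "'t \<Rightarrow> 's multiset"

definition wf_net :: "('s, 't) net \<Rightarrow> bool" where
  "wf_net N \<longleftrightarrow> (\<forall>t\<in>trans N. pre N t \<noteq> {#} \<and> post N t \<noteq> {#}
      \<and> set_mset (pre N t) \<subseteq> places N \<and> set_mset (post N t) \<subseteq> places N)"

definition is_marking :: "('s, 't) net \<Rightarrow> 's multiset \<Rightarrow> bool" where
  "is_marking N M \<longleftrightarrow> set_mset M \<subseteq> places N"

definition fires :: "('s, 't) net \<Rightarrow> 's multiset \<Rightarrow> 't \<Rightarrow> 's multiset \<Rightarrow> bool" where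
  "fires N M t M' \<longleftrightarrow> t \<in> trans N \<and> (\<exists>m3. M = pre N t + m3 \<and> M' = post N t + m3)"

definition step :: "('s, 't) net \<Rightarrow> 's multiset \<Rightarrow> 's multiset \<Rightarrow> bool" where
  "step N M M' \<longleftrightarrow> (\<exists>t. fires N M t M')"

definition reach :: "('s, 't) net \<Rightarrow> 's multiset \<Rightarrow> 's multiset \<Rightarrow> bool" where
  "reach N = (step N)\<^sup>*\<^sup>*"

section \<open>Causality, conflict, concurrency (nodes: Inl = place, Inr = transition)\<close>

definition prec :: "('s, 't) net \<Rightarrow> (('s + 't) \<times> ('s + 't)) set" where
  "prec N = {(Inl a, Inr t) | a t. t \<in> trans N \<and> a \<in># pre N t}
          \<union> {(Inr t, Inl a) | a t. t \<in> trans N \<and> a \<in># post N t}"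

definition causal :: "('s, 't) net \<Rightarrow> (('s + 't) \<times> ('s + 't)) set" where
  "causal N = (prec N)\<^sup>*"

definition conflict :: "('s, 't) net \<Rightarrow> ('s + 't) \<Rightarrow> ('s + 't) \<Rightarrow> bool" where
  "conflict N x y \<longleftrightarrow> (\<exists>t1 t2. t1 \<in> trans N \<and> t2 \<in> trans N \<and>
      (Inr t1, x) \<in> causal N \<and> (Inr t2, y) \<in> causal N \<and> t1 \<noteq> t2 \<and>
      set_mset (pre N t1) \<inter> set_mset (pre N t2) \<noteq> {})"

definition co :: "('s, 't) net \<Rightarrow> ('s + 't) \<Rightarrow> ('s + 't) \<Rightarrow> bool" where
  "co N x y \<longleftrightarrow> x \<noteq> y \<and> (x, y) \<notin> causal N \<and> (y, x) \<notin> causal N \<and> \<not> conflict N x y"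

definition CO :: "('s, 't) net \<Rightarrow> ('s + 't) set \<Rightarrow> bool" where
  "CO N X \<longleftrightarrow> (\<forall>x\<in>X. \<forall>y\<in>X. x \<noteq> y \<longrightarrow> co N x y)
      \<and> finite {t \<in> trans N. \<exists>x\<in>X. (Inr t, x) \<in> causal N}"

text \<open>Places a(h,i) with h = \<emptyset> (None) or h = {x} (Some x); transitions t(H).\<close>
datatype ('s, 't) uplace = UPl 's "('s, 't) utrans option" nat
     and ('s, 't) utrans = UTr 't "('s, 't) uplace fset"

fun fS :: "('s, 't) uplace \<Rightarrow> 's" where
  "fS (UPl a h i) = a"

fun fT :: "('s, 't) utrans \<Rightarrow> 't" where
  "fT (UTr t H) = t"

fun upre :: "('s, 't) utrans \<Rightarrow> ('s, 't) uplace multiset" where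
  "upre (UTr t H) = mset_set (fset H)"

fun upost :: "('s, 't) net \<Rightarrow> ('s, 't) utrans \<Rightarrow> ('s, 't) uplace multiset" where
  "upost N (UTr t H) =
     mset_set {UPl a (Some (UTr t H)) i | a i. 1 \<le> i \<and> i \<le> count (post N t) a}"

text \<open>Causal predecessors of a term are determined by its syntax, so causality, conflict
  and CO of elements of the unfolding computed here coincide with those computed
  inside the unfolding itself.\<close>
definition usyn :: "('s, 't) net \<Rightarrow> (('s, 't) uplace, ('s, 't) utrans) net" where
  "usyn N = \<lparr>places = UNIV, trans = UNIV, pre = upre, post = upost N\<rparr>"

inductive uplc :: "('s, 't) net \<Rightarrow> 's multiset \<Rightarrow> ('s, 't) uplace \<Rightarrow> bool"
  and utr :: "('s, 't) net \<Rightarrow> 's multiset \<Rightarrow> ('s, 't) utrans \<Rightarrow> bool"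
  for N :: "('s, 't) net" and m :: "'s multiset" where
  init: "1 \<le> i \<Longrightarrow> i \<le> count m a \<Longrightarrow> uplc N m (UPl a None i)"
| tr: "(\<forall>p. p |\<in>| H \<longrightarrow> uplc N m p) \<Longrightarrow> CO (usyn N) (Inl ` fset H) \<Longrightarrow>
       t \<in> trans N \<Longrightarrow> pre N t = image_mset fS (mset_set (fset H)) \<Longrightarrow> utr N m (UTr t H)"
| postp: "utr N m (UTr t H) \<Longrightarrow> 1 \<le> i \<Longrightarrow> i \<le> count (post N t) a \<Longrightarrow>
       uplc N m (UPl a (Some (UTr t H)) i)"

definition unfold :: "('s, 't) net \<Rightarrow> 's multiset \<Rightarrow> (('s, 't) uplace, ('s, 't) utrans) net" where
  "unfold N m = \<lparr>places = {p. uplc N m p}, trans = {x. utr N m x}, pre = upre, post = upost N\<rparr>"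

definition uinit :: "'s multiset \<Rightarrow> ('s, 't) uplace multiset" where
  "uinit m = mset_set {UPl a None i | a i. 1 \<le> i \<and> i \<le> count m a}"

section \<open>Reversible version (Inl t = forward t, Inr t = reverse of t)\<close>

definition rev_net :: "('p, 'u) net \<Rightarrow> ('p, 'u + 'u) net" where
  "rev_net Q = \<lparr>places = places Q, trans = Inl ` trans Q \<union> Inr ` trans Q,
     pre = (\<lambda>x. case x of Inl t \<Rightarrow> pre Q t | Inr t \<Rightarrow> post Q t),
     post = (\<lambda>x. case x of Inl t \<Rightarrow> post Q t | Inr t \<Rightarrow> pre Q t)\<rparr>"

end

theory Submission
  imports Defs
begin

text \<open>
  Both directions go through configurations of the unfolding: finite sets C of events whose
  consumed places are initial or produced inside C, with no place consumed twice. Their cuts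
  (initial and produced places minus consumed ones) are sets of places and fold onto markings
  of N.

  The reachable markings of the reversible unfolding are exactly such cuts: firing forward an
  event enabled at a cut extends the configuration, and firing e backward is only possible if e
  lies in the configuration and none of its output places has been consumed, so that removing e
  leaves a configuration. The cut of a configuration is reached in the unfolding by firing its
  events in order of increasing term size, hence its folding is reachable in N. Conversely a
  firing of N at the folding of a cut lifts to the unfolding: the preset of the transition is
  matched by places of the cut, and places of one cut are pairwise concurrent, so they form the
  preset of an event.
\<close>

section \<open>Numbered copies of the elements of a multiset\<close>

definition copies :: "'a multiset \<Rightarrow> ('a \<times> nat) set" where
  "copies M = {(a, i). 1 \<le> i \<and> i \<le> count M a}"

lemma copies_empty [simp]: "copies {#} = {}"
  unfolding copies_def by auto

lemma copies_add_mset: "copies (add_mset x M) = insert (x, Suc (count M x)) (copies M)"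
  unfolding copies_def by (auto split: if_splits)

lemma finite_copies [simp]: "finite (copies M)"
  by (induction M) (simp_all add: copies_add_mset)

lemma image_mset_fst_copies: "image_mset fst (mset_set (copies M)) = M"
proof (induction M)
  case (add x M)
  have "(x, Suc (count M x)) \<notin> copies M"
    unfolding copies_def by auto
  with add show ?case
    by (simp add: copies_add_mset)
qed simp

lemma image_mset_mset_set_copies:
  assumes "inj g" and "\<And>a i. f (g (a, i)) = a"
  shows "image_mset f (mset_set (g ` copies M)) = M"
proof -
  have "mset_set (g ` copies M) = image_mset g (mset_set (copies M))"
    using assms(1) by (simp add: image_mset_mset_set inj_on_subset)
  then have "image_mset f (mset_set (g ` copies M)) = image_mset (f \<circ> g) (mset_set (copies M))"
    by (simp add: multiset.map_comp)
  also have "f \<circ> g = fst"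
    using assms(2) by (auto simp: fun_eq_iff)
  finally show ?thesis
    by (simp add: image_mset_fst_copies)
qed

section \<open>Firing at markings that are sets\<close>

lemma mset_set_eq_plusD:
  assumes "finite A" and "mset_set A = X + Y"
  obtains S where "S \<subseteq> A" "X = mset_set S" "Y = mset_set (A - S)"
proof
  have sub: "X \<subseteq># mset_set A"
    using assms(2) by simp
  show S: "set_mset X \<subseteq> A"
    using set_mset_mono[OF sub] assms(1) by simp
  show X: "X = mset_set (set_mset X)"
  proof (rule multiset_eqI)
    fix a
    have "count X a \<le> count (mset_set A) a"
      using sub by (rule mset_subset_eq_count)
    then have le1: "count X a \<le> 1"
      by (simp add: count_mset_set' split: if_splits)
    show "count X a = count (mset_set (set_mset X)) a"
    proof (cases "a \<in># X")
      case True
      then have "0 < count X a" and "count (mset_set (set_mset X)) a = 1"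
        by simp_all
      with le1 show ?thesis
        by linarith
    qed (simp add: not_in_iff)
  qed
  have "Y = mset_set A - X"
    using assms(2) by simp
  then show "Y = mset_set (A - set_mset X)"
    using X mset_set_Diff[OF assms(1) S] by simp
qed

lemma mset_set_Un_Diff:
  assumes "finite A" and "P \<subseteq> A"
  shows "mset_set A = mset_set P + mset_set (A - P)"
proof -
  have "A = P \<union> (A - P)"
    using assms(2) by blast
  then show ?thesis
    using assms by (metis Diff_disjoint finite_Diff mset_set_Union rev_finite_subset)
qed

lemma fires_mset_set_iff:
  assumes "finite A" and "finite P" and "pre Q t = mset_set P"
  shows "fires Q (mset_set A) t M \<longleftrightarrow>
    t \<in> trans Q \<and> P \<subseteq> A \<and> M = post Q t + mset_set (A - P)"
proof
  assume "fires Q (mset_set A) t M"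
  then obtain Y where t: "t \<in> trans Q" and A: "mset_set A = mset_set P + Y"
    and M: "M = post Q t + Y"
    using assms(3) unfolding fires_def by auto
  obtain S where S: "S \<subseteq> A" "mset_set P = mset_set S" "Y = mset_set (A - S)"
    using mset_set_eq_plusD[OF assms(1) A] .
  have "finite S"
    using S(1) assms(1) by (rule finite_subset)
  with S(2) assms(2) have "P = S"
    by simp
  with S t M show "t \<in> trans Q \<and> P \<subseteq> A \<and> M = post Q t + mset_set (A - P)"
    by blast
next
  assume "t \<in> trans Q \<and> P \<subseteq> A \<and> M = post Q t + mset_set (A - P)"
  with mset_set_Un_Diff[OF assms(1)] assms(3) show "fires Q (mset_set A) t M"
    unfolding fires_def by (intro conjI exI[of _ "mset_set (A - P)"]) auto
qed

lemma fires_right_unique: "fires Q M t M1 \<Longrightarrow> fires Q M t M2 \<Longrightarrow> M1 = M2"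
  unfolding fires_def by auto

lemma fires_left_unique: "fires Q M1 t M \<Longrightarrow> fires Q M2 t M \<Longrightarrow> M1 = M2"
  unfolding fires_def by auto

lemma fires_rev_net:
  "fires (rev_net Q) M (Inl t) M' \<longleftrightarrow> fires Q M t M'"
  "fires (rev_net Q) M (Inr t) M' \<longleftrightarrow> fires Q M' t M"
  unfolding fires_def rev_net_def by auto

lemma rev_net_simps [simp]:
  "trans (rev_net Q) = Inl ` trans Q \<union> Inr ` trans Q"
  "pre (rev_net Q) (Inl t) = pre Q t" "pre (rev_net Q) (Inr t) = post Q t"
  "post (rev_net Q) (Inl t) = post Q t" "post (rev_net Q) (Inr t) = pre Q t"
  unfolding rev_net_def by simp_all

lemma step_rev_net: "step (rev_net Q) M M' \<longleftrightarrow> step Q M M' \<or> step Q M' M"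
  unfolding step_def by (metis fires_rev_net sum.exhaust)

section \<open>Places and events of the unfolding\<close>

fun hist :: "('s, 't) uplace \<Rightarrow> ('s, 't) utrans option" where
  "hist (UPl a h i) = h"

fun epre :: "('s, 't) utrans \<Rightarrow> ('s, 't) uplace set" where
  "epre (UTr t H) = fset H"

definition epost :: "('s, 't) net \<Rightarrow> ('s, 't) utrans \<Rightarrow> ('s, 't) uplace set" where
  "epost N e = (\<lambda>(a, i). UPl a (Some e) i) ` copies (post N (fT e))"

definition init_places :: "'s multiset \<Rightarrow> ('s, 't) uplace set" where
  "init_places m = (\<lambda>(a, i). UPl a None i) ` copies m"

lemma finite_epre [simp]: "finite (epre e)"
  by (cases e) simp

lemma finite_epost [simp]: "finite (epost N e)"
  unfolding epost_def by simp

lemma finite_init_places [simp]: "finite (init_places m)"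
  unfolding init_places_def by simp

lemma upre_eq_mset_set: "upre e = mset_set (epre e)"
  by (cases e) simp

lemma upost_eq_mset_set: "upost N e = mset_set (epost N e)"
proof (cases e)
  case (UTr t H)
  have "{UPl a (Some e) i | a i. 1 \<le> i \<and> i \<le> count (post N t) a} = epost N e"
    unfolding epost_def copies_def UTr by auto
  then show ?thesis
    using UTr by simp
qed

lemma uinit_eq_mset_set: "uinit m = mset_set (init_places m)"
proof -
  have "{UPl a None i | a i. 1 \<le> i \<and> i \<le> count m a} = init_places m"
    unfolding init_places_def copies_def by auto
  then show ?thesis
    unfolding uinit_def by (rule arg_cong)
qed

lemma image_mset_fS_upost: "image_mset fS (upost N e) = post N (fT e)"
  unfolding upost_eq_mset_set epost_def
  by (rule image_mset_mset_set_copies) (auto simp: inj_def)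

lemma image_mset_fS_uinit: "image_mset fS (uinit m) = m"
  unfolding uinit_eq_mset_set init_places_def
  by (rule image_mset_mset_set_copies) (auto simp: inj_def)

lemma mem_epost_iff: "UPl a h i \<in> epost N e \<longleftrightarrow> h = Some e \<and> 1 \<le> i \<and> i \<le> count (post N (fT e)) a"
  unfolding epost_def copies_def by auto

lemma mem_init_places_iff: "UPl a h i \<in> init_places m \<longleftrightarrow> h = None \<and> 1 \<le> i \<and> i \<le> count m a"
  unfolding init_places_def copies_def by auto

lemma hist_epost: "p \<in> epost N e \<Longrightarrow> hist p = Some e"
  unfolding epost_def by auto

lemma hist_init_places: "p \<in> init_places m \<Longrightarrow> hist p = None"
  unfolding init_places_def by auto

text \<open>Term size strictly increases along causality, so it can stand in for the causal order.\<close>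

lemma size_epre_less: "p \<in> epre e \<Longrightarrow> size p < size e"
proof (cases e)
  case (UTr t H)
  assume "p \<in> epre e"
  then have "p \<in> fset H"
    using UTr by simp
  then have "size p < (\<Sum>x\<in>fset H. Suc (size x))"
    using member_le_sum[of p "fset H" "\<lambda>x. Suc (size x)"] by simp
  also have "\<dots> \<le> size e"
    using UTr by (simp add: size_fset_simps)
  finally show ?thesis .
qed

lemma size_epost_greater: "p \<in> epost N e \<Longrightarrow> size e < size p"
  unfolding epost_def by auto

lemma epre_epost_disjoint: "epre e \<inter> epost N e = {}"
  using size_epre_less[of _ e] size_epost_greater[of _ N e] by (meson disjoint_iff less_asym)

lemma epost_fresh:
  assumes "e \<notin> C"
  shows "epost N e \<inter> (init_places m \<union> (\<Union>e'\<in>C. epost N e')) = {}"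
  using assms by (force dest: hist_epost hist_init_places)

lemma unfold_simps [simp]:
  "trans (unfold N m) = {e. utr N m e}"
  "pre (unfold N m) = upre"
  "post (unfold N m) = upost N"
  "places (unfold N m) = {p. uplc N m p}"
  unfolding unfold_def by simp_all

inductive_cases utrE: "utr N m (UTr t H)"

lemma utrD:
  assumes "utr N m e"
  shows "fT e \<in> trans N" and "pre N (fT e) = image_mset fS (upre e)"
proof -
  obtain t H where e: "e = UTr t H"
    by (cases e)
  from assms have "t \<in> trans N" and "pre N t = image_mset fS (mset_set (fset H))"
    unfolding e by (auto elim: utrE)
  then show "fT e \<in> trans N" and "pre N (fT e) = image_mset fS (upre e)"
    using e by simp_all
qed

lemma epre_nonempty:
  assumes "wf_net N" and "utr N m e"
  shows "epre e \<noteq> {}"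
  using assms utrD[OF assms(2)] unfolding wf_net_def upre_eq_mset_set by force

lemma epost_nonempty:
  assumes "wf_net N" and "utr N m e"
  shows "epost N e \<noteq> {}"
proof -
  obtain a where "a \<in># post N (fT e)"
    using assms utrD(1)[OF assms(2)] unfolding wf_net_def by blast
  then have "UPl a (Some e) 1 \<in> epost N e"
    by (simp add: mem_epost_iff)
  then show ?thesis
    by blast
qed

lemma fires_unfold_fold:
  assumes "fires (unfold N m) M e M'"
  shows "fires N (image_mset fS M) (fT e) (image_mset fS M')"
proof -
  obtain Y where e: "utr N m e" and "M = upre e + Y" "M' = upost N e + Y"
    using assms unfolding fires_def by auto
  then show ?thesis
    unfolding fires_def using utrD[OF e] by (auto simp: image_mset_fS_upost)
qed

lemma fires_unfold_mset_set_iff: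
  assumes "finite A"
  shows "fires (unfold N m) (mset_set A) e M \<longleftrightarrow>
    utr N m e \<and> epre e \<subseteq> A \<and> M = upost N e + mset_set (A - epre e)"
  using fires_mset_set_iff[OF assms finite_epre, of "unfold N m" e] by (simp add: upre_eq_mset_set)

section \<open>Configurations and their cuts\<close>

definition config :: "('s, 't) net \<Rightarrow> 's multiset \<Rightarrow> ('s, 't) utrans set \<Rightarrow> bool" where
  "config N m C \<longleftrightarrow> finite C \<and> (\<forall>e\<in>C. utr N m e)
     \<and> (\<forall>e\<in>C. epre e \<subseteq> init_places m \<union> (\<Union>e'\<in>C. epost N e'))
     \<and> (\<forall>e1\<in>C. \<forall>e2\<in>C. e1 \<noteq> e2 \<longrightarrow> epre e1 \<inter> epre e2 = {})"

definition cut_places :: "('s, 't) net \<Rightarrow> 's multiset \<Rightarrow> ('s, 't) utrans set \<Rightarrow> ('s, 't) uplace set" where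
  "cut_places N m C = (init_places m \<union> (\<Union>e\<in>C. epost N e)) - (\<Union>e\<in>C. epre e)"

lemma configD:
  assumes "config N m C"
  shows "finite C" and "e \<in> C \<Longrightarrow> utr N m e"
    and "e \<in> C \<Longrightarrow> epre e \<subseteq> init_places m \<union> (\<Union>e'\<in>C. epost N e')"
    and "e1 \<in> C \<Longrightarrow> e2 \<in> C \<Longrightarrow> e1 \<noteq> e2 \<Longrightarrow> epre e1 \<inter> epre e2 = {}"
  using assms unfolding config_def by blast+

lemma config_empty: "config N m {}"
  unfolding config_def by simp

lemma cut_places_empty: "cut_places N m {} = init_places m"
  unfolding cut_places_def by simp

lemma finite_cut_places: "config N m C \<Longrightarrow> finite (cut_places N m C)"
  unfolding config_def cut_places_def by simp

lemma uplc_cut_places: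
  assumes "config N m C" and "p \<in> cut_places N m C"
  shows "uplc N m p"
proof (cases p)
  case (UPl a h i)
  consider "p \<in> init_places m" | e where "e \<in> C" "p \<in> epost N e"
    using assms(2) unfolding cut_places_def by blast
  then show ?thesis
  proof cases
    case 1
    then show ?thesis
      using UPl by (auto simp: mem_init_places_iff intro: uplc_utr.init)
  next
    case 2
    with configD(2)[OF assms(1)] have "utr N m e"
      by blast
    with 2 show ?thesis
      using UPl by (cases e) (auto simp: mem_epost_iff intro: uplc_utr.postp)
  qed
qed

lemma config_insert:
  assumes C: "config N m C" and e: "utr N m e" "e \<notin> C" "epre e \<subseteq> cut_places N m C"
  shows "config N m (insert e C)"
    and "cut_places N m (insert e C) = (cut_places N m C - epre e) \<union> epost N e"
proof -
  have fresh: "epost N e \<inter> (\<Union>e'\<in>C. epre e') = {}"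
    using configD(3)[OF C] epost_fresh[OF e(2)] by blast
  have sub: "epre e \<subseteq> init_places m \<union> (\<Union>e'\<in>C. epost N e')"
    and disj: "\<And>e'. e' \<in> C \<Longrightarrow> epre e \<inter> epre e' = {}"
    using e(3) unfolding cut_places_def by blast+
  show "config N m (insert e C)"
    unfolding config_def
  proof (intro conjI ballI impI)
    show "finite (insert e C)"
      using configD(1)[OF C] by simp
  next
    fix e1 assume "e1 \<in> insert e C"
    then show "utr N m e1"
      using configD(2)[OF C] e(1) by blast
  next
    fix e1 assume "e1 \<in> insert e C"
    then show "epre e1 \<subseteq> init_places m \<union> (\<Union>e'\<in>insert e C. epost N e')"
      using configD(3)[OF C] sub by blast
  next
    fix e1 e2 assume "e1 \<in> insert e C" "e2 \<in> insert e C" "e1 \<noteq> e2"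
    then show "epre e1 \<inter> epre e2 = {}"
      using configD(4)[OF C] disj by blast
  qed
  show "cut_places N m (insert e C) = (cut_places N m C - epre e) \<union> epost N e"
    using fresh epre_epost_disjoint[of e N] unfolding cut_places_def by auto
qed

lemma config_remove_maximal:
  assumes C: "config N m C" and e: "e \<in> C" and max: "epost N e \<inter> (\<Union>e'\<in>C. epre e') = {}"
  shows "config N m (C - {e})" and "epre e \<subseteq> cut_places N m (C - {e})"
proof -
  show "config N m (C - {e})"
    unfolding config_def
  proof (intro conjI ballI impI)
    show "finite (C - {e})"
      using configD(1)[OF C] by simp
  next
    fix e1 assume "e1 \<in> C - {e}"
    then show "utr N m e1"
      using configD(2)[OF C] by blast
  next
    fix e1 assume "e1 \<in> C - {e}"
    then show "epre e1 \<subseteq> init_places m \<union> (\<Union>e'\<in>C - {e}. epost N e')"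
      using configD(3)[OF C] max by blast
  next
    fix e1 e2 assume "e1 \<in> C - {e}" "e2 \<in> C - {e}" "e1 \<noteq> e2"
    then show "epre e1 \<inter> epre e2 = {}"
      using configD(4)[OF C] by blast
  qed
  show "epre e \<subseteq> cut_places N m (C - {e})"
  proof -
    have "epre e \<subseteq> init_places m \<union> (\<Union>e'\<in>C - {e}. epost N e')"
      using configD(3)[OF C e] epre_epost_disjoint[of e N] by blast
    moreover have "epre e \<inter> (\<Union>e'\<in>C - {e}. epre e') = {}"
      using configD(4)[OF C e] by blast
    ultimately show ?thesis
      unfolding cut_places_def by blast
  qed
qed

lemma config_fire_forward:
  assumes "wf_net N" and C: "config N m C" and e: "utr N m e" "epre e \<subseteq> cut_places N m C"
  shows "config N m (insert e C)"
    and "fires (unfold N m) (mset_set (cut_places N m C)) e (mset_set (cut_places N m (insert e C)))"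
proof -
  have "e \<notin> C"
    using e epre_nonempty[OF assms(1) e(1)] unfolding cut_places_def by blast
  note ins = config_insert[OF C e(1) this e(2)]
  show "config N m (insert e C)"
    by (fact ins(1))
  have "epost N e \<inter> (cut_places N m C - epre e) = {}"
    using epost_fresh[OF \<open>e \<notin> C\<close>] unfolding cut_places_def by blast
  then have "mset_set (cut_places N m (insert e C)) = upost N e + mset_set (cut_places N m C - epre e)"
    unfolding ins(2) upost_eq_mset_set
    using finite_cut_places[OF C] by (subst mset_set_Union) (auto simp: add.commute)
  then show "fires (unfold N m) (mset_set (cut_places N m C)) e (mset_set (cut_places N m (insert e C)))"
    using e by (simp add: fires_unfold_mset_set_iff[OF finite_cut_places[OF C]])
qed

lemma config_fire_backward:
  assumes "wf_net N" and C: "config N m C" and f: "fires (unfold N m) M e (mset_set (cut_places N m C))"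
  shows "config N m (C - {e})" and "M = mset_set (cut_places N m (C - {e}))"
proof -
  have e: "utr N m e"
    using f unfolding fires_def by simp
  have pre: "pre (rev_net (unfold N m)) (Inr e) = mset_set (epost N e)"
    by (simp add: upost_eq_mset_set)
  have "fires (rev_net (unfold N m)) (mset_set (cut_places N m C)) (Inr e) M"
    using f by (simp add: fires_rev_net)
  then have post: "epost N e \<subseteq> cut_places N m C"
    using fires_mset_set_iff[OF finite_cut_places[OF C] finite_epost pre] by simp
  obtain p where p: "p \<in> epost N e"
    using epost_nonempty[OF assms(1) e] by blast
  have "e \<in> C"
  proof (rule ccontr)
    assume "e \<notin> C"
    then have "p \<notin> cut_places N m C"
      using epost_fresh[of e C N m] p unfolding cut_places_def by blast
    with p post show False
      by blast
  qed
  have max: "epost N e \<inter> (\<Union>e'\<in>C. epre e') = {}"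
    using post unfolding cut_places_def by blast
  note rem = config_remove_maximal[OF C \<open>e \<in> C\<close> max]
  show "config N m (C - {e})"
    by (fact rem(1))
  have "insert e (C - {e}) = C"
    using \<open>e \<in> C\<close> by blast
  then have "fires (unfold N m) (mset_set (cut_places N m (C - {e}))) e (mset_set (cut_places N m C))"
    using config_fire_forward(2)[OF assms(1) rem(1) e rem(2)] by simp
  with f show "M = mset_set (cut_places N m (C - {e}))"
    by (rule fires_left_unique)
qed

section \<open>Cuts consist of concurrent places\<close>

definition config_nodes ::
    "('s, 't) net \<Rightarrow> 's multiset \<Rightarrow> ('s, 't) utrans set \<Rightarrow> (('s, 't) uplace + ('s, 't) utrans) set" where
  "config_nodes N m C = Inl ` (init_places m \<union> (\<Union>e\<in>C. epost N e)) \<union> Inr ` C"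

lemma prec_usyn_iff:
  "(x, y) \<in> prec (usyn N) \<longleftrightarrow>
     (\<exists>p e. x = Inl p \<and> y = Inr e \<and> p \<in> epre e) \<or> (\<exists>p e. x = Inr e \<and> y = Inl p \<and> p \<in> epost N e)"
  unfolding prec_def usyn_def by (auto simp: upre_eq_mset_set upost_eq_mset_set)

lemma config_nodes_causal_closed:
  assumes C: "config N m C" and "(x, z) \<in> causal (usyn N)" and "z \<in> config_nodes N m C"
  shows "x \<in> config_nodes N m C"
  using assms(2,3) unfolding causal_def
proof (induction rule: converse_rtrancl_induct)
  case (step x y)
  then have y: "y \<in> config_nodes N m C"
    by blast
  from \<open>(x, y) \<in> prec (usyn N)\<close> consider
      p e where "x = Inl p" "y = Inr e" "p \<in> epre e"
    | p e where "x = Inr e" "y = Inl p" "p \<in> epost N e"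
    unfolding prec_usyn_iff by blast
  then show ?case
  proof cases
    case 1
    then show ?thesis
      using y C unfolding config_nodes_def config_def by blast
  next
    case 2
    then have "e \<in> C"
      using y epost_fresh[of e C N m] unfolding config_nodes_def by blast
    with 2 show ?thesis
      unfolding config_nodes_def by blast
  qed
qed

lemma causal_cut_places:
  assumes "config N m C" and "p \<in> cut_places N m C" and "(Inr e, Inl p) \<in> causal (usyn N)"
  shows "e \<in> C"
proof -
  have "Inl p \<in> config_nodes N m C"
    using assms(2) unfolding cut_places_def config_nodes_def by blast
  then show ?thesis
    using config_nodes_causal_closed[OF assms(1,3)] unfolding config_nodes_def by blast
qed

lemma not_causal_cut_places:
  assumes C: "config N m C" and "p \<in> cut_places N m C" "q \<in> cut_places N m C" "p \<noteq> q"
  shows "(Inl p, Inl q) \<notin> causal (usyn N)"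
proof
  assume "(Inl p, Inl q) \<in> causal (usyn N)"
  then show False
    unfolding causal_def
  proof (cases rule: converse_rtranclE)
    case base
    then show False
      using assms(4) by simp
  next
    case (step w)
    then obtain e where w: "w = Inr e" and "p \<in> epre e"
      unfolding prec_usyn_iff by blast
    moreover have "e \<in> C"
      using causal_cut_places[OF C assms(3)] step(2) w unfolding causal_def by simp
    ultimately show False
      using assms(2) unfolding cut_places_def by blast
  qed
qed

lemma CO_cut_places:
  fixes N :: "('s, 't) net"
  assumes C: "config N m C" and S: "S \<subseteq> cut_places N m C"
  shows "CO (usyn N) (Inl ` S)"
  unfolding CO_def
proof (intro conjI ballI impI)
  have "{e \<in> trans (usyn N). \<exists>x\<in>Inl ` S. (Inr e, x) \<in> causal (usyn N)} \<subseteq> C"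
    using causal_cut_places[OF C] S by blast
  then show "finite {e \<in> trans (usyn N). \<exists>x\<in>Inl ` S. (Inr e, x) \<in> causal (usyn N)}"
    using C unfolding config_def by (blast intro: finite_subset)
next
  fix x y :: "('s, 't) uplace + ('s, 't) utrans"
  assume "x \<in> Inl ` S" "y \<in> Inl ` S" "x \<noteq> y"
  then obtain p q where pq: "x = Inl p" "y = Inl q" "p \<in> cut_places N m C" "q \<in> cut_places N m C" "p \<noteq> q"
    using S by blast
  have "\<not> conflict (usyn N) x y"
  proof
    assume "conflict (usyn N) x y"
    then obtain e1 e2 where "(Inr e1, x) \<in> causal (usyn N)" "(Inr e2, y) \<in> causal (usyn N)"
      and "e1 \<noteq> e2" and "epre e1 \<inter> epre e2 \<noteq> {}"
      unfolding conflict_def usyn_def by (auto simp: upre_eq_mset_set)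
    moreover from this have "e1 \<in> C" "e2 \<in> C"
      using causal_cut_places[OF C] pq by blast+
    ultimately show False
      using C unfolding config_def by blast
  qed
  then show "co (usyn N) x y"
    using not_causal_cut_places[OF C] pq unfolding co_def by blast
qed

lemma utr_of_cut_places:
  assumes C: "config N m C" and S: "S \<subseteq> cut_places N m C"
    and t: "t \<in> trans N" "pre N t = image_mset fS (mset_set S)"
  shows "utr N m (UTr t (Abs_fset S))" and "epre (UTr t (Abs_fset S)) = S"
proof -
  have "finite S"
    using S finite_cut_places[OF C] by (rule finite_subset)
  then have H: "fset (Abs_fset S) = S"
    by (simp add: Abs_fset_inverse)
  then show "epre (UTr t (Abs_fset S)) = S"
    by simp
  show "utr N m (UTr t (Abs_fset S))"
  proof (rule uplc_utr.tr)
    show "\<forall>p. p |\<in>| Abs_fset S \<longrightarrow> uplc N m p"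
      using H S uplc_cut_places[OF C] by auto
    show "CO (usyn N) (Inl ` fset (Abs_fset S))"
      using H CO_cut_places[OF C S] by simp
  qed (use H t in simp_all)
qed

lemma reach_rev_unfold_cut_places:
  assumes "wf_net N" and "reach (rev_net (unfold N m)) (uinit m) M"
  shows "\<exists>C. config N m C \<and> M = mset_set (cut_places N m C)"
  using assms(2) unfolding reach_def
proof (induction rule: rtranclp_induct)
  case base
  show ?case
    using config_empty cut_places_empty uinit_eq_mset_set by metis
next
  case (step M M')
  then obtain C where C: "config N m C" and M: "M = mset_set (cut_places N m C)"
    by blast
  from \<open>step (rev_net (unfold N m)) M M'\<close>
  have "step (unfold N m) M M' \<or> step (unfold N m) M' M"
    by (simp add: step_rev_net)
  then obtain e where "fires (unfold N m) M e M' \<or> fires (unfold N m) M' e M"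
    unfolding step_def by blast
  then show ?case
  proof
    assume f: "fires (unfold N m) M e M'"
    then have e: "utr N m e" "epre e \<subseteq> cut_places N m C"
      using M by (simp_all add: fires_unfold_mset_set_iff[OF finite_cut_places[OF C]])
    from config_fire_forward[OF assms(1) C e] f M show ?case
      by (metis fires_right_unique)
  next
    assume "fires (unfold N m) M' e M"
    from config_fire_backward[OF assms(1) C this[unfolded M]] show ?case
      by blast
  qed
qed

lemma reach_fold_cut_places:
  assumes "wf_net N" and "config N m C"
  shows "reach N m (image_mset fS (mset_set (cut_places N m C)))"
  using assms(2)
proof (induction "card C" arbitrary: C rule: less_induct)
  case less
  note C = less.prems
  note fin = configD(1)[OF C] and utr = configD(2)[OF C]
  show ?case
  proof (cases "C = {}")
    case True
    then show ?thesis
      by (simp add: reach_def cut_places_empty uinit_eq_mset_set[symmetric] image_mset_fS_uinit)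
  next
    case False
    \<comment> \<open>an event of maximal size produces no place consumed by another event of C\<close>
    have "Max (size ` C) \<in> size ` C"
      using fin False by simp
    then obtain e where e: "e \<in> C" and "size e = Max (size ` C)"
      by (metis imageE)
    then have max: "size e' \<le> size e" if "e' \<in> C" for e'
      using fin that by simp
    have "p \<notin> epre e'" if "p \<in> epost N e" and "e' \<in> C" for p e'
    proof
      assume "p \<in> epre e'"
      with size_epre_less size_epost_greater[OF that(1)] max[OF that(2)] show False
        by (meson leD less_trans)
    qed
    then have "epost N e \<inter> (\<Union>e'\<in>C. epre e') = {}"
      by blast
    note rem = config_remove_maximal[OF C e this]
    have "insert e (C - {e}) = C"
      using e by blast
    then have "fires (unfold N m) (mset_set (cut_places N m (C - {e}))) e (mset_set (cut_places N m C))"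
      using config_fire_forward(2)[OF assms(1) rem(1) utr[OF e] rem(2)] by simp
    then have "step N (image_mset fS (mset_set (cut_places N m (C - {e}))))
        (image_mset fS (mset_set (cut_places N m C)))"
      unfolding step_def by (blast dest: fires_unfold_fold)
    moreover have "reach N m (image_mset fS (mset_set (cut_places N m (C - {e}))))"
      using less.hyps[OF card_Diff1_less[OF fin e] rem(1)] .
    ultimately show ?thesis
      unfolding reach_def by simp
  qed
qed

lemma reach_lift_cut_places:
  assumes "wf_net N" and "reach N m m'"
  shows "\<exists>C. config N m C \<and> reach (rev_net (unfold N m)) (uinit m) (mset_set (cut_places N m C))
      \<and> m' = image_mset fS (mset_set (cut_places N m C))"
  using assms(2) unfolding reach_def
proof (induction rule: rtranclp_induct)
  case base
  show ?case
    using config_empty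
    by (intro exI[of _ "{}"]) (simp add: cut_places_empty uinit_eq_mset_set[symmetric] image_mset_fS_uinit)
next
  case (step M M')
  then obtain C where C: "config N m C"
    and reach: "reach (rev_net (unfold N m)) (uinit m) (mset_set (cut_places N m C))"
    and M: "M = image_mset fS (mset_set (cut_places N m C))"
    unfolding reach_def by blast
  from \<open>step N M M'\<close> obtain t where f: "fires N M t M'"
    unfolding step_def by blast
  then obtain Y where t: "t \<in> trans N" and "M = pre N t + Y"
    unfolding fires_def by blast
  from image_mset_eq_plusD[OF this(2)[unfolded M]] obtain X Z
    where "mset_set (cut_places N m C) = X + Z" and pre: "pre N t = image_mset fS X"
    by blast
  from mset_set_eq_plusD[OF finite_cut_places[OF C] this(1)] obtain S
    where S: "S \<subseteq> cut_places N m C" and "X = mset_set S"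
    by metis
  define e where "e = UTr t (Abs_fset S)"
  have e: "utr N m e" "epre e \<subseteq> cut_places N m C"
    using utr_of_cut_places[OF C S t] pre \<open>X = mset_set S\<close> S unfolding e_def by simp_all
  note fwd = config_fire_forward[OF assms(1) C e]
  have "fires N M t (image_mset fS (mset_set (cut_places N m (insert e C))))"
    using fires_unfold_fold[OF fwd(2)] M unfolding e_def by simp
  with f have "M' = image_mset fS (mset_set (cut_places N m (insert e C)))"
    by (rule fires_right_unique)
  moreover have "step (rev_net (unfold N m)) (mset_set (cut_places N m C))
      (mset_set (cut_places N m (insert e C)))"
    unfolding step_def using fires_rev_net(1)[THEN iffD2, OF fwd(2)] ..
  with reach have "reach (rev_net (unfold N m)) (uinit m) (mset_set (cut_places N m (insert e C)))"
    unfolding reach_def by (rule rtranclp.rtrancl_into_rtrancl)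
  ultimately show ?case
    using fwd(1) unfolding reach_def by blast
qed

theorem mainTheorem13:
  fixes N :: "('s, 't) net" and m m' :: "'s multiset"
  assumes "wf_net N" and "is_marking N m" and "is_marking N m'"
  shows "reach N m m' \<longleftrightarrow>
    (\<exists>m''. is_marking (unfold N m) m''
       \<and> reach (rev_net (unfold N m)) (uinit m) m''
       \<and> m' = image_mset fS m'')"
proof
  assume "reach N m m'"
  then obtain C where C: "config N m C"
    and "reach (rev_net (unfold N m)) (uinit m) (mset_set (cut_places N m C))"
    and "m' = image_mset fS (mset_set (cut_places N m C))"
    using reach_lift_cut_places[OF assms(1)] by blast
  moreover have "is_marking (unfold N m) (mset_set (cut_places N m C))"
    unfolding is_marking_def using finite_cut_places[OF C] uplc_cut_places[OF C] by auto
  ultimately show "\<exists>m''. is_marking (unfold N m) m''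
      \<and> reach (rev_net (unfold N m)) (uinit m) m'' \<and> m' = image_mset fS m''"
    by blast
next
  assume "\<exists>m''. is_marking (unfold N m) m''
      \<and> reach (rev_net (unfold N m)) (uinit m) m'' \<and> m' = image_mset fS m''"
  then obtain m'' where "reach (rev_net (unfold N m)) (uinit m) m''" and m': "m' = image_mset fS m''"
    by blast
  then obtain C where "config N m C" and "m'' = mset_set (cut_places N m C)"
    using reach_rev_unfold_cut_places[OF assms(1)] by blast
  then show "reach N m m'"
    using reach_fold_cut_places[OF assms(1)] m' by simp
qed

end
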